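(* Let $\mathcal{F}$ satisfy the standard conditions. Then the set $\mathbb{R}_{\mathcal{F}}$ of $\mathcal{F}$-computable real numbers is a subfield of $\mathbb{R}$.
   Context: $\mathbb{N}=\{0,1,2,\dots\}$. $\mathcal{F}$ is a set of functions $\mathbb{N}^n\to\mathbb{N}$; it satisfies the standard conditions if it contains the zero function, the successor, all projections $P^n_i$, addition, multiplication and modified subtraction $x\dot- y=\max(x-y,0)$, and is closed under composition. An $\mathcal{F}$-sequence is $A:\mathbb{N}\to\mathbb{Q}$, $A(x)=\frac{f(x)-g(x)}{h(x)+1}$, with $f,g,h:\mathbb{N}\to\mathbb{N}$ in $\mathcal{F}$. A real number $\alpha$ is $\mathcal{F}$-computable if there is an $\mathcal{F}$-sequence $A$ with $|A(x)-\alpha|\le\frac1{x+1}$ for all $x$. *)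

theory Defs
  imports Complex_Main
begin

text \<open>A class of functions \<open>\<nat>\<^sup>n \<rightarrow> \<nat>\<close> (for varying n) is represented as
  \<open>F :: nat \<Rightarrow> (nat list \<Rightarrow> nat) set\<close>: \<open>F n\<close> collects the n-ary members, an n-ary
  function being a function on lists, of which only the values on lists of
  length n matter.\<close>

definition in_cls :: "(nat \<Rightarrow> (nat list \<Rightarrow> nat) set) \<Rightarrow> nat \<Rightarrow> (nat list \<Rightarrow> nat) \<Rightarrow> bool" where
  "in_cls F n g \<longleftrightarrow> (\<exists>f\<in>F n. \<forall>xs. length xs = n \<longrightarrow> f xs = g xs)"

definition standard_conditions :: "(nat \<Rightarrow> (nat list \<Rightarrow> nat) set) \<Rightarrow> bool" where
  "standard_conditions F \<longleftrightarrow>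
     in_cls F 1 (\<lambda>xs. 0) \<and>
     in_cls F 1 (\<lambda>xs. Suc (xs ! 0)) \<and>
     (\<forall>n i. 1 \<le> i \<and> i \<le> n \<longrightarrow> in_cls F n (\<lambda>xs. xs ! (i - 1))) \<and>
     in_cls F 2 (\<lambda>xs. xs ! 0 + xs ! 1) \<and>
     in_cls F 2 (\<lambda>xs. xs ! 0 * xs ! 1) \<and>
     in_cls F 2 (\<lambda>xs. xs ! 0 - xs ! 1) \<and>
     (\<forall>m n f gs. in_cls F m f \<and> length gs = m \<and> (\<forall>g\<in>set gs. in_cls F n g)
        \<longrightarrow> in_cls F n (\<lambda>xs. f (map (\<lambda>g. g xs) gs)))"

definition unary_in :: "(nat \<Rightarrow> (nat list \<Rightarrow> nat) set) \<Rightarrow> (nat \<Rightarrow> nat) \<Rightarrow> bool" where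
  "unary_in F f \<longleftrightarrow> in_cls F 1 (\<lambda>xs. f (xs ! 0))"

definition F_sequence :: "(nat \<Rightarrow> (nat list \<Rightarrow> nat) set) \<Rightarrow> (nat \<Rightarrow> rat) \<Rightarrow> bool" where
  "F_sequence F A \<longleftrightarrow> (\<exists>f g h. unary_in F f \<and> unary_in F g \<and> unary_in F h \<and>
     (\<forall>x. A x = (of_nat (f x) - of_nat (g x)) / (of_nat (h x) + 1)))"

definition F_computable :: "(nat \<Rightarrow> (nat list \<Rightarrow> nat) set) \<Rightarrow> real \<Rightarrow> bool" where
  "F_computable F \<alpha> \<longleftrightarrow> (\<exists>A. F_sequence F A \<and>
     (\<forall>x. \<bar>real_of_rat (A x) - \<alpha>\<bar> \<le> 1 / (real x + 1)))"

definition is_subfield_of_reals :: "real set \<Rightarrow> bool" where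
  "is_subfield_of_reals S \<longleftrightarrow> 0 \<in> S \<and> 1 \<in> S \<and>
     (\<forall>x\<in>S. \<forall>y\<in>S. x + y \<in> S \<and> x * y \<in> S) \<and>
     (\<forall>x\<in>S. - x \<in> S) \<and> (\<forall>x\<in>S. x \<noteq> 0 \<longrightarrow> inverse x \<in> S)"

end

theory Submission
  imports Defs
begin

(* Represent an F-computable real by fractions q x = (f x - g x) / (h x + 1) with f, g, h in F.
   Sums, products, negatives and inverses of such fraction sequences are again fraction
   sequences, since the new numerators and denominators are polynomials in f, g, h, possibly
   with modified subtraction.  The approximation error is controlled by reindexing: reading q at
   c (x + 1) - 1 instead of at x divides the error 1 / (x + 1) by c, which pays for the error
   amplification of addition (c = 2), of multiplication (c = 2M + 1, M bounding both factors)
   and of inversion (c = K^2, where 2 / K is at most the absolute value of the inverted number). *)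

locale standard_class =
  fixes F :: "nat \<Rightarrow> (nat list \<Rightarrow> nat) set"
  assumes standard_conditions: "standard_conditions F"
begin

lemma in_cls_basic:
  "in_cls F 1 (\<lambda>xs. 0)" "in_cls F 1 (\<lambda>xs. Suc (xs ! 0))" "in_cls F 1 (\<lambda>xs. xs ! 0)"
  "in_cls F 2 (\<lambda>xs. xs ! 0 + xs ! 1)" "in_cls F 2 (\<lambda>xs. xs ! 0 * xs ! 1)"
  "in_cls F 2 (\<lambda>xs. xs ! 0 - xs ! 1)"
  using standard_conditions unfolding standard_conditions_def
  by (auto, metis diff_self_eq_0 order_refl)

lemma in_cls_compose:
  "in_cls F m f \<Longrightarrow> length gs = m \<Longrightarrow> \<forall>g\<in>set gs. in_cls F n g
    \<Longrightarrow> in_cls F n (\<lambda>xs. f (map (\<lambda>g. g xs) gs))"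
  using standard_conditions unfolding standard_conditions_def by blast

lemma unary_in_compose_unary:
  assumes "in_cls F 1 p" and "unary_in F f"
  shows "unary_in F (\<lambda>x. p [f x])"
  using in_cls_compose[of 1 p "[\<lambda>ys. f (ys ! 0)]" 1] assms by (simp add: unary_in_def)

lemma unary_in_compose_binary:
  assumes "in_cls F 2 p" and "unary_in F f" and "unary_in F g"
  shows "unary_in F (\<lambda>x. p [f x, g x])"
  using in_cls_compose[of 2 p "[\<lambda>ys. f (ys ! 0), \<lambda>ys. g (ys ! 0)]" 1] assms
  by (simp add: unary_in_def)

lemma unary_in_compose:
  assumes "unary_in F f" and "unary_in F g"
  shows "unary_in F (\<lambda>x. f (g x))"
  using unary_in_compose_unary[of "\<lambda>xs. f (xs ! 0)" g] assms by (simp add: unary_in_def)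

lemma unary_in_id: "unary_in F (\<lambda>x. x)"
  using in_cls_basic(3) by (simp add: unary_in_def)

lemma unary_in_const: "unary_in F (\<lambda>x. c)"
proof (induction c)
  case 0
  then show ?case using in_cls_basic(1) by (simp add: unary_in_def)
next
  case (Suc c)
  then show ?case using unary_in_compose_unary[OF in_cls_basic(2)] by simp
qed

lemma unary_in_add: "unary_in F f \<Longrightarrow> unary_in F g \<Longrightarrow> unary_in F (\<lambda>x. f x + g x)"
  using unary_in_compose_binary[OF in_cls_basic(4)] by simp

lemma unary_in_mult: "unary_in F f \<Longrightarrow> unary_in F g \<Longrightarrow> unary_in F (\<lambda>x. f x * g x)"
  using unary_in_compose_binary[OF in_cls_basic(5)] by simp

lemma unary_in_diff: "unary_in F f \<Longrightarrow> unary_in F g \<Longrightarrow> unary_in F (\<lambda>x. f x - g x)"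
  using unary_in_compose_binary[OF in_cls_basic(6)] by simp

lemmas unary_in_intros =
  unary_in_id unary_in_const unary_in_add unary_in_mult unary_in_diff

end

definition F_fraction_seq :: "(nat \<Rightarrow> (nat list \<Rightarrow> nat) set) \<Rightarrow> (nat \<Rightarrow> real) \<Rightarrow> bool" where
  "F_fraction_seq F q \<longleftrightarrow> (\<exists>f g h. unary_in F f \<and> unary_in F g \<and> unary_in F h \<and>
     (\<forall>x. q x = (real (f x) - real (g x)) / (real (h x) + 1)))"

lemma F_fraction_seqI:
  assumes "unary_in F f" "unary_in F g" "unary_in F h"
    and "\<And>x. q x = (real (f x) - real (g x)) / (real (h x) + 1)"
  shows "F_fraction_seq F q"
  using assms unfolding F_fraction_seq_def by blast

lemma of_rat_fraction:
  "real_of_rat ((of_nat a - of_nat b) / (of_nat c + 1)) = (real a - real b) / (real c + 1)"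
  by (simp add: of_rat_divide of_rat_diff of_rat_add)

lemma F_computable_iff_fraction_seq:
  "F_computable F \<alpha> \<longleftrightarrow> (\<exists>q. F_fraction_seq F q \<and> (\<forall>x. \<bar>q x - \<alpha>\<bar> \<le> 1 / (real x + 1)))"
proof
  assume "F_computable F \<alpha>"
  then obtain A where A: "F_sequence F A"
    and approx: "\<forall>x. \<bar>real_of_rat (A x) - \<alpha>\<bar> \<le> 1 / (real x + 1)"
    unfolding F_computable_def by blast
  from A have "F_fraction_seq F (\<lambda>x. real_of_rat (A x))"
    unfolding F_sequence_def F_fraction_seq_def by (fastforce simp: of_rat_fraction)
  with approx show "\<exists>q. F_fraction_seq F q \<and> (\<forall>x. \<bar>q x - \<alpha>\<bar> \<le> 1 / (real x + 1))" by blast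
next
  assume "\<exists>q. F_fraction_seq F q \<and> (\<forall>x. \<bar>q x - \<alpha>\<bar> \<le> 1 / (real x + 1))"
  then obtain f g h where in_F: "unary_in F f" "unary_in F g" "unary_in F h"
    and approx: "\<forall>x. \<bar>(real (f x) - real (g x)) / (real (h x) + 1) - \<alpha>\<bar> \<le> 1 / (real x + 1)"
    unfolding F_fraction_seq_def by auto
  define A :: "nat \<Rightarrow> rat" where "A x = (of_nat (f x) - of_nat (g x)) / (of_nat (h x) + 1)" for x
  have "F_sequence F A" unfolding F_sequence_def A_def using in_F by blast
  moreover have "real_of_rat (A x) = (real (f x) - real (g x)) / (real (h x) + 1)" for x
    unfolding A_def by (rule of_rat_fraction)
  ultimately show "F_computable F \<alpha>"
    unfolding F_computable_def using approx by auto
qed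

lemma F_fraction_seq_uminus: "F_fraction_seq F q \<Longrightarrow> F_fraction_seq F (\<lambda>x. - q x)"
  unfolding F_fraction_seq_def by (metis minus_diff_eq minus_divide_left)

(* For naturals, 1 - (1 - n) is the indicator of n > 0 and (f - g) + (g - f) = |f - g|; the
   denominator |f - g| - 1 + 1 differs from |f - g| only if f = g, where both sides are 0. *)
lemma inverse_fraction_eq:
  fixes f g h :: nat
  shows "inverse ((real f - real g) / (real h + 1)) =
    (real ((h + 1) * (1 - (1 - (f - g)))) - real ((h + 1) * (1 - (1 - (g - f)))))
    / (real ((f - g) + (g - f) - 1) + 1)"
proof (cases f g rule: linorder_cases)
  case less
  then have "1 - (1 - (f - g)) = 0" "1 - (1 - (g - f)) = 1"
    "real ((f - g) + (g - f) - 1) + 1 = real g - real f" by auto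
  then show ?thesis by (simp add: divide_simps algebra_simps)
next
  case greater
  then have "1 - (1 - (f - g)) = 1" "1 - (1 - (g - f)) = 0"
    "real ((f - g) + (g - f) - 1) + 1 = real f - real g" by auto
  then show ?thesis by simp
qed simp

lemma abs_mult_diff_le:
  fixes A B a b e M :: "'a :: linordered_idom"
  assumes "\<bar>A - a\<bar> \<le> e" "\<bar>B - b\<bar> \<le> e" "e \<le> 1" "\<bar>a\<bar> \<le> M" "\<bar>b\<bar> \<le> M"
  shows "\<bar>A * B - a * b\<bar> \<le> (2 * M + 1) * e"
proof -
  have "\<bar>A\<bar> \<le> M + 1" using assms by linarith
  then have "\<bar>A * (B - b)\<bar> \<le> (M + 1) * e"
    unfolding abs_mult using assms by (intro mult_mono) auto
  moreover have "\<bar>b * (A - a)\<bar> \<le> M * e"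
    unfolding abs_mult using assms by (intro mult_mono) auto
  moreover have "A * B - a * b = A * (B - b) + b * (A - a)"
    by (simp add: algebra_simps)
  ultimately have "\<bar>A * B - a * b\<bar> \<le> (M + 1) * e + M * e"
    by (metis abs_triangle_ineq add_mono order.trans)
  then show ?thesis by (simp add: algebra_simps)
qed

lemma abs_inverse_diff_le:
  fixes A a e d :: "'a :: linordered_field"
  assumes "\<bar>A - a\<bar> \<le> e" "e \<le> d" "2 * d \<le> \<bar>a\<bar>" "d > 0"
  shows "\<bar>inverse A - inverse a\<bar> \<le> e / (2 * d\<^sup>2)"
proof -
  have "d \<le> \<bar>A\<bar>" using assms by linarith
  then have denom: "2 * d\<^sup>2 \<le> \<bar>A\<bar> * \<bar>a\<bar>"
    using assms mult_mono[of d "\<bar>A\<bar>" "2 * d" "\<bar>a\<bar>"] by (simp add: power2_eq_square algebra_simps)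
  have "A \<noteq> 0" "a \<noteq> 0" using \<open>d \<le> \<bar>A\<bar>\<close> assms by auto
  then have "\<bar>inverse A - inverse a\<bar> = \<bar>A - a\<bar> / (\<bar>A\<bar> * \<bar>a\<bar>)"
    by (simp add: inverse_diff_inverse abs_mult divide_inverse abs_minus_commute mult.commute)
  also have "\<dots> \<le> e / (2 * d\<^sup>2)"
    using assms denom by (intro frac_le) auto
  finally show ?thesis .
qed

context standard_class
begin

lemma F_fraction_seq_of_nat: "F_fraction_seq F (\<lambda>x. real c)"
  unfolding F_fraction_seq_def using unary_in_const[of c] unary_in_const[of 0] by force

lemma F_fraction_seq_reindex:
  "F_fraction_seq F q \<Longrightarrow> unary_in F s \<Longrightarrow> F_fraction_seq F (\<lambda>x. q (s x))"
  unfolding F_fraction_seq_def by (blast intro: unary_in_compose)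

lemma F_fraction_seq_add:
  assumes "F_fraction_seq F q1" and "F_fraction_seq F q2"
  shows "F_fraction_seq F (\<lambda>x. q1 x + q2 x)"
proof -
  obtain f1 g1 h1 f2 g2 h2 where in_F: "unary_in F f1" "unary_in F g1" "unary_in F h1"
      "unary_in F f2" "unary_in F g2" "unary_in F h2"
    and q1: "\<And>x. q1 x = (real (f1 x) - real (g1 x)) / (real (h1 x) + 1)"
    and q2: "\<And>x. q2 x = (real (f2 x) - real (g2 x)) / (real (h2 x) + 1)"
    using assms unfolding F_fraction_seq_def by metis
  have "q1 x + q2 x =
      (real (f1 x * (h2 x + 1) + f2 x * (h1 x + 1)) - real (g1 x * (h2 x + 1) + g2 x * (h1 x + 1)))
      / (real (h1 x * h2 x + h1 x + h2 x) + 1)" for x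
    unfolding q1 q2 by (simp add: field_simps)
  then show ?thesis
    by (rule F_fraction_seqI[rotated 3]) (intro unary_in_intros in_F)+
qed

lemma F_fraction_seq_mult:
  assumes "F_fraction_seq F q1" and "F_fraction_seq F q2"
  shows "F_fraction_seq F (\<lambda>x. q1 x * q2 x)"
proof -
  obtain f1 g1 h1 f2 g2 h2 where in_F: "unary_in F f1" "unary_in F g1" "unary_in F h1"
      "unary_in F f2" "unary_in F g2" "unary_in F h2"
    and q1: "\<And>x. q1 x = (real (f1 x) - real (g1 x)) / (real (h1 x) + 1)"
    and q2: "\<And>x. q2 x = (real (f2 x) - real (g2 x)) / (real (h2 x) + 1)"
    using assms unfolding F_fraction_seq_def by metis
  have "q1 x * q2 x =
      (real (f1 x * f2 x + g1 x * g2 x) - real (f1 x * g2 x + g1 x * f2 x))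
      / (real (h1 x * h2 x + h1 x + h2 x) + 1)" for x
    unfolding q1 q2 by (simp add: field_simps)
  then show ?thesis
    by (rule F_fraction_seqI[rotated 3]) (intro unary_in_intros in_F)+
qed

lemma F_fraction_seq_inverse:
  assumes "F_fraction_seq F q"
  shows "F_fraction_seq F (\<lambda>x. inverse (q x))"
proof -
  obtain f g h where in_F: "unary_in F f" "unary_in F g" "unary_in F h"
    and q: "\<And>x. q x = (real (f x) - real (g x)) / (real (h x) + 1)"
    using assms unfolding F_fraction_seq_def by metis
  show ?thesis
    unfolding q inverse_fraction_eq
    by (rule F_fraction_seqI[rotated 3], rule refl) (intro unary_in_intros in_F)+
qed

lemma F_computable_approx_scaled:
  assumes "F_computable F \<alpha>" and "c > 0"
  obtains q where "F_fraction_seq F q" and "\<And>x. \<bar>q x - \<alpha>\<bar> \<le> 1 / (real c * (real x + 1))"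
proof -
  obtain q where q: "F_fraction_seq F q" and approx: "\<And>x. \<bar>q x - \<alpha>\<bar> \<le> 1 / (real x + 1)"
    using assms(1) unfolding F_computable_iff_fraction_seq by blast
  define s where "s x = c * x + (c - 1)" for x
  have s_eq: "real (s x) + 1 = real c * (real x + 1)" for x
    using \<open>c > 0\<close> by (simp add: s_def of_nat_diff algebra_simps)
  have "\<bar>q (s x) - \<alpha>\<bar> \<le> 1 / (real c * (real x + 1))" for x
    using approx[of "s x"] unfolding s_eq .
  moreover have "unary_in F s"
    unfolding s_def by (intro unary_in_intros)
  then have "F_fraction_seq F (\<lambda>x. q (s x))"
    by (rule F_fraction_seq_reindex[OF q])
  ultimately show thesis using that by blast
qed

lemma F_computable_of_nat: "F_computable F (real c)"
  unfolding F_computable_iff_fraction_seq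
  by (intro exI[of _ "\<lambda>x. real c"]) (simp add: F_fraction_seq_of_nat)

lemma F_computable_uminus: "F_computable F \<alpha> \<Longrightarrow> F_computable F (- \<alpha>)"
  unfolding F_computable_iff_fraction_seq
  by (metis F_fraction_seq_uminus abs_minus_commute minus_diff_eq minus_diff_minus)

lemma F_computable_add:
  assumes "F_computable F \<alpha>" and "F_computable F \<beta>"
  shows "F_computable F (\<alpha> + \<beta>)"
proof -
  obtain q1 where q1: "F_fraction_seq F q1"
    and approx1: "\<And>x. \<bar>q1 x - \<alpha>\<bar> \<le> 1 / (2 * (real x + 1))"
    using F_computable_approx_scaled[OF assms(1), of 2] by auto
  obtain q2 where q2: "F_fraction_seq F q2"
    and approx2: "\<And>x. \<bar>q2 x - \<beta>\<bar> \<le> 1 / (2 * (real x + 1))"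
    using F_computable_approx_scaled[OF assms(2), of 2] by auto
  have "\<bar>(q1 x + q2 x) - (\<alpha> + \<beta>)\<bar> \<le> 1 / (real x + 1)" for x
  proof -
    have "\<bar>(q1 x + q2 x) - (\<alpha> + \<beta>)\<bar> \<le> \<bar>q1 x - \<alpha>\<bar> + \<bar>q2 x - \<beta>\<bar>"
      by linarith
    also have "\<dots> \<le> 2 * (1 / (2 * (real x + 1)))"
      using approx1[of x] approx2[of x] by simp
    also have "\<dots> = 1 / (real x + 1)"
      by (simp add: divide_simps)
    finally show ?thesis .
  qed
  then show ?thesis
    unfolding F_computable_iff_fraction_seq using F_fraction_seq_add[OF q1 q2] by blast
qed

lemma F_computable_mult:
  assumes "F_computable F \<alpha>" and "F_computable F \<beta>"
  shows "F_computable F (\<alpha> * \<beta>)"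
proof -
  obtain M :: nat where M: "\<bar>\<alpha>\<bar> \<le> M" "\<bar>\<beta>\<bar> \<le> M"
    by (metis max.bounded_iff real_arch_simple)
  obtain q1 where q1: "F_fraction_seq F q1"
    and approx1: "\<And>x. \<bar>q1 x - \<alpha>\<bar> \<le> 1 / (real (2 * M + 1) * (real x + 1))"
    using F_computable_approx_scaled[OF assms(1), of "2 * M + 1"] by auto
  obtain q2 where q2: "F_fraction_seq F q2"
    and approx2: "\<And>x. \<bar>q2 x - \<beta>\<bar> \<le> 1 / (real (2 * M + 1) * (real x + 1))"
    using F_computable_approx_scaled[OF assms(2), of "2 * M + 1"] by auto
  have "\<bar>q1 x * q2 x - \<alpha> * \<beta>\<bar> \<le> 1 / (real x + 1)" for x
  proof -
    define e where "e = 1 / (real (2 * M + 1) * (real x + 1))"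
    have "e \<le> 1"
      unfolding e_def by (simp add: divide_simps mult_ge1_I)
    then have "\<bar>q1 x * q2 x - \<alpha> * \<beta>\<bar> \<le> (2 * real M + 1) * e"
      using approx1[of x] approx2[of x] M unfolding e_def by (intro abs_mult_diff_le)
    also have "\<dots> = 1 / (real x + 1)"
      unfolding e_def by (simp add: add.commute)
    finally show ?thesis .
  qed
  then show ?thesis
    unfolding F_computable_iff_fraction_seq using F_fraction_seq_mult[OF q1 q2] by blast
qed

lemma F_computable_inverse:
  assumes "F_computable F \<alpha>" and "\<alpha> \<noteq> 0"
  shows "F_computable F (inverse \<alpha>)"
proof -
  obtain K :: nat where K: "2 / \<bar>\<alpha>\<bar> < K"
    using reals_Archimedean2 by blast
  then have "2 < \<bar>\<alpha>\<bar> * real K"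
    using \<open>\<alpha> \<noteq> 0\<close> by (simp add: field_simps)
  then have "K > 0"
    by (cases "K = 0") auto
  with \<open>2 < \<bar>\<alpha>\<bar> * real K\<close> have K_bound: "2 * (1 / real K) \<le> \<bar>\<alpha>\<bar>"
    by (simp add: field_simps)
  obtain q where q: "F_fraction_seq F q"
    and approx: "\<And>x. \<bar>q x - \<alpha>\<bar> \<le> 1 / (real (K * K) * (real x + 1))"
    using F_computable_approx_scaled[OF assms(1), of "K * K"] \<open>K > 0\<close> by auto
  have "\<bar>inverse (q x) - inverse \<alpha>\<bar> \<le> 1 / (real x + 1)" for x
  proof -
    have "1 / (real (K * K) * (real x + 1)) \<le> 1 / real K"
      using \<open>K > 0\<close> by (simp add: divide_simps mult_ge1_I)
    then have "\<bar>inverse (q x) - inverse \<alpha>\<bar>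
        \<le> 1 / (real (K * K) * (real x + 1)) / (2 * (1 / real K)\<^sup>2)"
      using approx K_bound \<open>K > 0\<close> by (intro abs_inverse_diff_le) auto
    also have "\<dots> = 1 / (2 * (real x + 1))"
      using \<open>K > 0\<close> by (simp add: power2_eq_square divide_simps)
    finally show ?thesis by (simp add: field_simps)
  qed
  then show ?thesis
    unfolding F_computable_iff_fraction_seq using F_fraction_seq_inverse[OF q] by blast
qed

end

theorem mainTheorem12:
  fixes F :: "nat \<Rightarrow> (nat list \<Rightarrow> nat) set"
  assumes "standard_conditions F"
  shows "is_subfield_of_reals {\<alpha>. F_computable F \<alpha>}"
proof -
  interpret standard_class F by unfold_locales (rule assms)
  show ?thesis
    unfolding is_subfield_of_reals_def
    using F_computable_of_nat[of 0] F_computable_of_nat[of 1] F_computable_add F_computable_mult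
      F_computable_uminus F_computable_inverse
    by simp
qed

end
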